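(* In the transaction packaging game described in the context, let $\sigma^*$ be a mixed strategy. Suppose there exists $w\in\mathbb{R}$ such that for every $\mathsf{tx}\in M$: if $p^{\sigma^*}(\mathsf{tx})=0$ then $v(\mathsf{tx})\exp(-\lambda p^{\sigma^*}(\mathsf{tx}))\le w$; if $0<p^{\sigma^*}(\mathsf{tx})<1$ then $v(\mathsf{tx})\exp(-\lambda p^{\sigma^*}(\mathsf{tx}))=w$; and if $p^{\sigma^*}(\mathsf{tx})=1$ then $v(\mathsf{tx})\exp(-\lambda p^{\sigma^*}(\mathsf{tx}))\ge w$. Then $\sigma^*$ is an equilibrium strategy.
   Context: Transaction packaging game. Fix a positive integer $k$ (block capacity), a real $\lambda>0$ (network latency parameter), a finite set $M$ (the mempool) of transactions with $|M|\ge k$, and a gas price function $v:M\to(0,\infty)$. Miners are indexed by $i\in[0,1]$. A pure strategy of a miner is a subset $D\subseteq M$ with $|D|=k$; let $\mathcal{S}$ be the set of such subsets. A mixed strategy is a probability distribution $\sigma$ on $\mathcal{S}$, and its marginal probability is $p^\sigma(\mathsf{tx})=\sum_{D\in\mathcal{S}}\sigma(D)\mathbf{1}[\mathsf{tx}\in D]$. Conditional on miner $i$ mining a block $B_i$ (drawn from her mixed strategy $\sigma_i$), the number $\gamma$ of other blocks mined is distributed as $\mathrm{Poisson}(\lambda)$; they are mined by miners chosen independently and uniformly at random from $[0,1]$, each such miner $j$ producing a block $B_j$ drawn independently from her mixed strategy $\sigma_j$. The utility of miner $i$ is $u_i(\sigma_i,\sigma_{-i})=\sum_{\mathsf{tx}\in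 M}p^{\sigma_i}(\mathsf{tx})\,v(\mathsf{tx})\,\Pr[\text{no other mined block }B_j\ (j\neq i)\text{ contains }\mathsf{tx}]$. A mixed strategy $\sigma^*$ is an equilibrium strategy if for every $i\in[0,1]$ and every mixed strategy $\sigma$, $u_i(\sigma,\sigma^*_{-i})\le u_i(\sigma^*,\sigma^*_{-i})$, where $\sigma^*_{-i}$ denotes the profile in which all miners other than $i$ use $\sigma^*$. *)

theory Defs
  imports Complex_Main
begin

definition pure_strategies :: "'a set \<Rightarrow> nat \<Rightarrow> 'a set set" where
  "pure_strategies M k = {D. D \<subseteq> M \<and> card D = k}"

definition mixed_strategy :: "'a set \<Rightarrow> nat \<Rightarrow> ('a set \<Rightarrow> real) \<Rightarrow> bool" where
  "mixed_strategy M k \<sigma> \<longleftrightarrow>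
     (\<forall>D. 0 \<le> \<sigma> D) \<and> (\<forall>D. D \<notin> pure_strategies M k \<longrightarrow> \<sigma> D = 0) \<and>
     (\<Sum>D\<in>pure_strategies M k. \<sigma> D) = 1"

definition marginal :: "'a set \<Rightarrow> nat \<Rightarrow> ('a set \<Rightarrow> real) \<Rightarrow> 'a \<Rightarrow> real" where
  "marginal M k \<sigma> tx = (\<Sum>D\<in>pure_strategies M k. \<sigma> D * (if tx \<in> D then 1 else 0))"

text \<open>Probability that no other mined block contains tx, when all other miners
  use \<sigma>: the number of other blocks is Poisson(lam), and each of them is drawn
  independently from \<sigma> (the miner producing it is uniform on [0,1]; the
  event that it is miner i itself has probability zero).\<close>
definition no_other_prob :: "'a set \<Rightarrow> nat \<Rightarrow> real \<Rightarrow> ('a set \<Rightarrow> real) \<Rightarrow> 'a \<Rightarrow> real" where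
  "no_other_prob M k lam \<sigma> tx =
     (\<Sum>n. (exp (-lam) * lam ^ n / fact n) *
            (\<Sum>D\<in>pure_strategies M k. \<sigma> D * (if tx \<in> D then 0 else 1)) ^ n)"

text \<open>Utility of a miner i playing \<sigma> while all other miners play \<sigma>'
  (independent of the index i).\<close>
definition utility ::
  "'a set \<Rightarrow> nat \<Rightarrow> real \<Rightarrow> ('a \<Rightarrow> real) \<Rightarrow> ('a set \<Rightarrow> real) \<Rightarrow> ('a set \<Rightarrow> real) \<Rightarrow> real" where
  "utility M k lam v \<sigma> \<sigma>' = (\<Sum>tx\<in>M. marginal M k \<sigma> tx * v tx * no_other_prob M k lam \<sigma>' tx)"

definition equilibrium_strategy ::
  "'a set \<Rightarrow> nat \<Rightarrow> real \<Rightarrow> ('a \<Rightarrow> real) \<Rightarrow> ('a set \<Rightarrow> real) \<Rightarrow> bool" where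
  "equilibrium_strategy M k lam v \<sigma>s \<longleftrightarrow>
     mixed_strategy M k \<sigma>s \<and>
     (\<forall>i::real. 0 \<le> i \<and> i \<le> 1 \<longrightarrow>
        (\<forall>\<sigma>. mixed_strategy M k \<sigma> \<longrightarrow> utility M k lam v \<sigma> \<sigma>s \<le> utility M k lam v \<sigma>s \<sigma>s))"

end

theory Submission
  imports Defs
begin

text \<open>Against opponents playing \<open>\<sigma>s\<close>, a transaction escapes the Poisson(\<open>lam\<close>) other
  blocks with probability \<open>exp (-lam * p\<^sup>*(tx))\<close>, so a deviation \<open>\<sigma>\<close> earns a linear function
  \<open>\<Sum>tx. p\<^sup>\<sigma>(tx) * a tx\<close> of its marginals, where \<open>a tx = v tx * exp (-lam * p\<^sup>*(tx))\<close>.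
  Marginal vectors lie in \<open>[0,1]\<^sup>M\<close> and all sum to \<open>k\<close>, and the hypotheses say that \<open>p\<^sup>*\<close>
  fills this budget greedily by the value \<open>a\<close> with cut-off \<open>w\<close>; hence
  \<open>(p\<^sup>\<sigma>(tx) - p\<^sup>*(tx)) * (a tx - w) \<le> 0\<close> for every \<open>tx\<close>, and summing gives the claim.\<close>

lemma threshold_vector_maximizes_weighted_sum:
  fixes p q a :: "'a \<Rightarrow> real" and w :: real
  assumes same_total: "(\<Sum>x\<in>A. p x) = (\<Sum>x\<in>A. q x)"
    and p_bounds: "\<And>x. x \<in> A \<Longrightarrow> 0 \<le> p x \<and> p x \<le> 1"
    and q_bounds: "\<And>x. x \<in> A \<Longrightarrow> 0 \<le> q x \<and> q x \<le> 1"
    and q_zero: "\<And>x. x \<in> A \<Longrightarrow> q x = 0 \<Longrightarrow> a x \<le> w"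
    and q_between: "\<And>x. x \<in> A \<Longrightarrow> 0 < q x \<Longrightarrow> q x < 1 \<Longrightarrow> a x = w"
    and q_one: "\<And>x. x \<in> A \<Longrightarrow> q x = 1 \<Longrightarrow> w \<le> a x"
  shows "(\<Sum>x\<in>A. p x * a x) \<le> (\<Sum>x\<in>A. q x * a x)"
proof -
  have termwise: "(p x - q x) * (a x - w) \<le> 0" if x: "x \<in> A" for x
  proof -
    consider "q x = 0" | "0 < q x \<and> q x < 1" | "q x = 1"
      using q_bounds[OF x] by linarith
    then show ?thesis
    proof cases
      case 1
      then show ?thesis using q_zero[OF x] p_bounds[OF x] by (simp add: mult_nonneg_nonpos)
    next
      case 2
      then show ?thesis using q_between[OF x] by simp
    next
      case 3
      then show ?thesis using q_one[OF x] p_bounds[OF x] by (simp add: mult_nonpos_nonneg)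
    qed
  qed
  have "(\<Sum>x\<in>A. (p x - q x) * (a x - w))
      = (\<Sum>x\<in>A. p x * a x) - (\<Sum>x\<in>A. q x * a x) - w * ((\<Sum>x\<in>A. p x) - (\<Sum>x\<in>A. q x))"
    by (simp add: sum_subtractf sum_distrib_left left_diff_distrib right_diff_distrib mult.commute)
  moreover have "(\<Sum>x\<in>A. (p x - q x) * (a x - w)) \<le> 0"
    using termwise by (simp add: sum_nonpos)
  ultimately show ?thesis
    using same_total by simp
qed

lemma marginal_bounds:
  assumes "mixed_strategy M k \<sigma>"
  shows "0 \<le> marginal M k \<sigma> tx \<and> marginal M k \<sigma> tx \<le> 1"
proof
  show "0 \<le> marginal M k \<sigma> tx"
    using assms unfolding marginal_def mixed_strategy_def by (intro sum_nonneg) auto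
  have "marginal M k \<sigma> tx \<le> (\<Sum>D\<in>pure_strategies M k. \<sigma> D)"
    using assms unfolding marginal_def mixed_strategy_def by (intro sum_mono) auto
  then show "marginal M k \<sigma> tx \<le> 1"
    using assms unfolding mixed_strategy_def by simp
qed

lemma sum_marginal_eq_block_size:
  assumes "mixed_strategy M k \<sigma>" and "finite M"
  shows "(\<Sum>tx\<in>M. marginal M k \<sigma> tx) = real k"
proof -
  have block_count: "(\<Sum>tx\<in>M. if tx \<in> D then 1 else 0) = real k"
    if D: "D \<in> pure_strategies M k" for D
  proof -
    have "M \<inter> D = D" using D unfolding pure_strategies_def by auto
    then show ?thesis
      using D \<open>finite M\<close> unfolding pure_strategies_def by (simp add: sum.If_cases)
  qed
  have "(\<Sum>tx\<in>M. marginal M k \<sigma> tx)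
      = (\<Sum>D\<in>pure_strategies M k. \<sigma> D * (\<Sum>tx\<in>M. if tx \<in> D then 1 else 0))"
    unfolding marginal_def by (subst sum.swap) (simp add: sum_distrib_left)
  also have "\<dots> = (\<Sum>D\<in>pure_strategies M k. \<sigma> D) * real k"
    using block_count by (simp add: sum_distrib_right)
  also have "\<dots> = real k"
    using assms unfolding mixed_strategy_def by simp
  finally show ?thesis .
qed

text \<open>The Poisson generating function: \<open>E[q\<^sup>N] = exp (-lam * (1 - q))\<close> for \<open>N ~ Poisson(lam)\<close>,
  here with \<open>q = 1 - p\<^sup>\<sigma>(tx)\<close> the probability that one block misses \<open>tx\<close>.\<close>
lemma no_other_prob_eq_exp:
  assumes "mixed_strategy M k \<sigma>"
  shows "no_other_prob M k lam \<sigma> tx = exp (-lam * marginal M k \<sigma> tx)"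
proof -
  define q where "q = (\<Sum>D\<in>pure_strategies M k. \<sigma> D * (if tx \<in> D then 0 else 1))"
  have "q = (\<Sum>D\<in>pure_strategies M k. \<sigma> D - \<sigma> D * (if tx \<in> D then 1 else 0))"
    unfolding q_def by (intro sum.cong) auto
  also have "\<dots> = 1 - marginal M k \<sigma> tx"
    using assms unfolding marginal_def mixed_strategy_def by (simp add: sum_subtractf)
  finally have q_eq: "q = 1 - marginal M k \<sigma> tx" .
  have "(\<lambda>n. exp (-lam) * ((lam * q) ^ n /\<^sub>R fact n)) sums (exp (-lam) * exp (lam * q))"
    by (intro sums_mult exp_converges)
  then have "(\<lambda>n. (exp (-lam) * lam ^ n / fact n) * q ^ n) sums (exp (-lam) * exp (lam * q))"
    by (simp add: power_mult_distrib divide_inverse mult_ac)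
  then have "no_other_prob M k lam \<sigma> tx = exp (-lam) * exp (lam * q)"
    unfolding no_other_prob_def q_def by (rule sums_unique[symmetric])
  also have "\<dots> = exp (-lam * marginal M k \<sigma> tx)"
    by (simp add: q_eq exp_add[symmetric] algebra_simps)
  finally show ?thesis .
qed

lemma utility_eq_marginal_sum:
  assumes "mixed_strategy M k \<sigma>s"
  shows "utility M k lam v \<sigma> \<sigma>s
       = (\<Sum>tx\<in>M. marginal M k \<sigma> tx * (v tx * exp (-lam * marginal M k \<sigma>s tx)))"
  unfolding utility_def no_other_prob_eq_exp[OF assms] by (simp add: mult.assoc)

theorem lemma3p2:
  fixes M :: "'a set" and k :: nat and lam :: real and v :: "'a \<Rightarrow> real"
    and \<sigma>s :: "'a set \<Rightarrow> real" and w :: real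
  assumes "0 < k" and "0 < lam" and "finite M" and "k \<le> card M"
    and "\<forall>tx\<in>M. 0 < v tx"
    and "mixed_strategy M k \<sigma>s"
    and "\<forall>tx\<in>M. marginal M k \<sigma>s tx = 0 \<longrightarrow>
                 v tx * exp (-lam * marginal M k \<sigma>s tx) \<le> w"
    and "\<forall>tx\<in>M. 0 < marginal M k \<sigma>s tx \<and> marginal M k \<sigma>s tx < 1 \<longrightarrow>
                 v tx * exp (-lam * marginal M k \<sigma>s tx) = w"
    and "\<forall>tx\<in>M. marginal M k \<sigma>s tx = 1 \<longrightarrow>
                 v tx * exp (-lam * marginal M k \<sigma>s tx) \<ge> w"
  shows "equilibrium_strategy M k lam v \<sigma>s"
proof -
  have "utility M k lam v \<sigma> \<sigma>s \<le> utility M k lam v \<sigma>s \<sigma>s"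
    if \<sigma>: "mixed_strategy M k \<sigma>" for \<sigma>
    unfolding utility_eq_marginal_sum[OF assms(6)]
  proof (rule threshold_vector_maximizes_weighted_sum)
    show "(\<Sum>tx\<in>M. marginal M k \<sigma> tx) = (\<Sum>tx\<in>M. marginal M k \<sigma>s tx)"
      using sum_marginal_eq_block_size[OF \<sigma> assms(3)]
        sum_marginal_eq_block_size[OF assms(6,3)] by simp
  qed (use marginal_bounds[OF \<sigma>] marginal_bounds[OF assms(6)] assms(7-9) in auto)
  then show ?thesis
    unfolding equilibrium_strategy_def using assms(6) by blast
qed

end
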